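(* Let $p\in(0,1)$ be fixed, let $C$ be a positive integer, and let $\mathcal{E}\subset[n]^2$ be such that, for every $i\in[n]$, $$ \left|\{j\in[n]:(i,j)\in\mathcal{E}\}\right|\leqslant C,\qquad \left|\{j\in[n]:(j,i)\in\mathcal{E}\}\right|\leqslant C. $$ Then the probability that there exists a perfect matching in $G(n,n,p)$ containing no edge from $\mathcal{E}$ is $1-e^{-\Omega(n)}$.
   Context: $G(n,n,p)$ is the random bipartite graph obtained from the complete bipartite graph $K_{n,n}$, whose two parts are each identified with $[n]$, by keeping each edge independently with probability $p$; a pair $(i,j)\in[n]^2$ is identified with the edge between vertex $i$ of the first part and vertex $j$ of the second part. $\Omega(n)$ refers to $n\to\infty$ with $p$ and $C$ fixed. *)

theory Defs
  imports "HOL-Probability.Probability"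
begin

text \<open>G(n,n,p): the random bipartite graph on two copies of [n] = {1..n}; a graph is
  represented by its edge indicator G :: nat \<times> nat \<Rightarrow> bool, where G (i,j) means that
  vertex i of the first part is joined to vertex j of the second part.\<close>
definition random_bipartite :: "nat \<Rightarrow> real \<Rightarrow> (nat \<times> nat \<Rightarrow> bool) pmf" where
  "random_bipartite n p = Pi_pmf ({1..n} \<times> {1..n}) False (\<lambda>_. bernoulli_pmf p)"

definition has_pm_avoiding :: "nat \<Rightarrow> (nat \<times> nat \<Rightarrow> bool) \<Rightarrow> (nat \<times> nat) set \<Rightarrow> bool" where
  "has_pm_avoiding n G E \<longleftrightarrow>
     (\<exists>\<sigma>. \<sigma> permutes {1..n} \<and> (\<forall>i\<in>{1..n}. G (i, \<sigma> i) \<and> (i, \<sigma> i) \<notin> E))"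

end

theory Submission
  imports Defs "HOL-Real_Asymp.Real_Asymp"
begin

text \<open>If G(n,n,p) has no perfect matching avoiding E, Hall's theorem yields sets S, T of vertices
  with |S| + |T| = n + 1 between which every pair is a non-edge or lies in E. Since E has
  degrees at most C, such a rectangle contains at least min(|S|,|T|) (n/2 - C) pairs outside E,
  all of which must be missing from G. A union bound over the at most n^(2 min(|S|,|T|))
  rectangles of each shape bounds the failure probability by n^3 (1-p)^(n/2 - C), which is
  exponentially small.\<close>

definition hall_condition :: "'a set \<Rightarrow> ('a \<Rightarrow> 'b set) \<Rightarrow> bool" where
  "hall_condition A N \<longleftrightarrow> (\<forall>S\<subseteq>A. card S \<le> card (\<Union>(N ` S)))"

text \<open>If deleting x1 from N a fails for a set S1 \<ni> a and deleting x2 fails for S2 \<ni> a, then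
  submodularity of the neighbourhood size, applied to S1 \<union> S2 and S1 \<inter> S2 - {a}, contradicts
  Hall's condition for N.\<close>
lemma hall_condition_delete_one:
  assumes A: "finite A" and fin: "\<forall>a\<in>A. finite (N a)" and hall: "hall_condition A N"
    and a: "a \<in> A" and x12: "x1 \<in> N a" "x2 \<in> N a" "x1 \<noteq> x2"
  shows "\<exists>x\<in>{x1, x2}. hall_condition A (N(a := N a - {x}))"
proof (rule ccontr)
  assume "\<not> ?thesis"
  then obtain S1 S2 where S1: "S1 \<subseteq> A" "card (\<Union>((N(a := N a - {x1})) ` S1)) < card S1"
    and S2: "S2 \<subseteq> A" "card (\<Union>((N(a := N a - {x2})) ` S2)) < card S2"
    by (auto simp: hall_condition_def not_le)
  define U1 where "U1 = \<Union>((N(a := N a - {x1})) ` S1)"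
  define U2 where "U2 = \<Union>((N(a := N a - {x2})) ` S2)"
  have hallN: "card S \<le> card (\<Union>(N ` S))" if "S \<subseteq> A" for S
    using hall that by (simp add: hall_condition_def)
  have a_mem: "a \<in> S" if "S \<subseteq> A" "card (\<Union>((N(a := N a - {x})) ` S)) < card S" for S x
  proof (rule ccontr)
    assume "a \<notin> S"
    then have "(N(a := N a - {x})) ` S = N ` S" by auto
    then show False using that hallN by (metis not_le)
  qed
  have "a \<in> S1" by (rule a_mem[OF S1])
  have "a \<in> S2" by (rule a_mem[OF S2])
  have finU: "finite (\<Union>(N ` A))" using A fin by blast
  have fU: "finite U1" "finite U2"
    unfolding U1_def U2_def using S1(1) S2(1) a by (auto intro: finite_subset[OF _ finU])
  have fS: "finite S1" "finite S2" using S1 S2 A finite_subset by auto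
  have "card (S1 \<union> S2) \<le> card (U1 \<union> U2)"
  proof -
    have "\<Union>(N ` (S1 \<union> S2)) \<subseteq> U1 \<union> U2"
      unfolding U1_def U2_def using \<open>a \<in> S1\<close> \<open>a \<in> S2\<close> x12 by fastforce
    then show ?thesis using hallN[of "S1 \<union> S2"] S1 S2 fU by (meson card_mono finite_UnI le_sup_iff order_trans)
  qed
  moreover have "card (S1 \<inter> S2 - {a}) \<le> card (U1 \<inter> U2)"
  proof -
    have "\<Union>(N ` (S1 \<inter> S2 - {a})) \<subseteq> U1 \<inter> U2" unfolding U1_def U2_def by fastforce
    then show ?thesis using hallN[of "S1 \<inter> S2 - {a}"] S1 fU by (meson card_mono finite_Int Diff_subset le_infI1 order_trans)
  qed
  moreover have "card (S1 \<inter> S2 - {a}) + 1 = card (S1 \<inter> S2)"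
    using \<open>a \<in> S1\<close> \<open>a \<in> S2\<close> fS by (metis IntI Suc_eq_plus1 card_Suc_Diff1 finite_Int)
  moreover have "card U1 + card U2 = card (U1 \<union> U2) + card (U1 \<inter> U2)" using card_Un_Int fU by blast
  moreover have "card S1 + card S2 = card (S1 \<union> S2) + card (S1 \<inter> S2)" using card_Un_Int fS by blast
  ultimately show False using S1(2) S2(2) unfolding U1_def U2_def by linarith
qed

lemma hall_marriage_singletons:
  assumes hall: "hall_condition A N" and "\<forall>a\<in>A. card (N a) < 2"
  shows "\<exists>f. inj_on f A \<and> (\<forall>a\<in>A. f a \<in> N a)"
proof -
  have hall_pair: "card {a, b} \<le> card (N a \<union> N b)" if "a \<in> A" "b \<in> A" for a b
  proof -
    have "{a, b} \<subseteq> A" using that by blast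
    then have "card {a, b} \<le> card (\<Union>(N ` {a, b}))"
      using hall unfolding hall_condition_def by blast
    then show ?thesis by simp
  qed
  define f where "f a = the_elem (N a)" for a
  have single: "N a = {f a}" if "a \<in> A" for a
  proof -
    have "1 \<le> card (N a)" using hall_pair[OF that that] by simp
    moreover have "card (N a) < 2" using assms(2) that by blast
    ultimately have "card (N a) = 1" by linarith
    then obtain x where "N a = {x}" by (rule card_1_singletonE)
    then show ?thesis by (simp add: f_def)
  qed
  have "inj_on f A"
  proof (rule inj_onI, rule ccontr)
    fix a b assume ab: "a \<in> A" "b \<in> A" "f a = f b" "a \<noteq> b"
    then have "N a \<union> N b = {f a}" by (simp add: single)
    then show False using hall_pair[OF ab(1,2)] ab(4) by simp
  qed
  moreover have "\<forall>a\<in>A. f a \<in> N a" by (simp add: single)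
  ultimately show ?thesis by blast
qed

theorem hall_marriage:
  assumes "finite A" "\<forall>a\<in>A. finite (N a)" "hall_condition A N"
  shows "\<exists>f. inj_on f A \<and> (\<forall>a\<in>A. f a \<in> N a)"
  using assms(2,3)
proof (induction "\<Sum>a\<in>A. card (N a)" arbitrary: N rule: less_induct)
  case (less N)
  show ?case
  proof (cases "\<exists>a\<in>A. 2 \<le> card (N a)")
    case True
    then obtain a where a: "a \<in> A" "2 \<le> card (N a)" by blast
    have "finite (N a)" using less.prems(1) a(1) by blast
    then have "\<not> (\<forall>y\<in>N a. \<forall>z\<in>N a. y = z)" using a(2) card_le_Suc0_iff_eq by fastforce
    then obtain x1 x2 where x12: "x1 \<in> N a" "x2 \<in> N a" "x1 \<noteq> x2" by blast
    obtain x where x: "x \<in> {x1, x2}" and hall': "hall_condition A (N(a := N a - {x}))"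
      using hall_condition_delete_one[OF assms(1) less.prems a(1) x12] by blast
    from x x12 have "x \<in> N a" by blast
    have "card (N a - {x}) < card (N a)" using less.prems(1) a(1) \<open>x \<in> N a\<close> by (meson card_Diff1_less)
    then have smaller: "(\<Sum>b\<in>A. card ((N(a := N a - {x})) b)) < (\<Sum>b\<in>A. card (N b))"
      using assms(1) a(1) by (intro sum_strict_mono_ex1) auto
    have "\<forall>b\<in>A. finite ((N(a := N a - {x})) b)" using less.prems(1) by simp
    with less.hyps[OF smaller] hall' obtain f where f: "inj_on f A" "\<forall>b\<in>A. f b \<in> (N(a := N a - {x})) b"
      by blast
    show ?thesis
    proof (intro exI conjI)
      show "inj_on f A" by (fact f(1))
      show "\<forall>b\<in>A. f b \<in> N b" using f(2) by (auto split: if_splits)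
    qed
  next
    case False
    then have "\<forall>a\<in>A. card (N a) < 2" by (auto simp: not_le)
    with less.prems(2) show ?thesis by (rule hall_marriage_singletons)
  qed
qed

lemma has_pm_avoidingI:
  assumes "inj_on f {1..n}" "\<forall>i\<in>{1..n}. f i \<in> {1..n} \<and> G (i, f i) \<and> (i, f i) \<notin> E"
  shows "has_pm_avoiding n G E"
proof -
  define \<sigma> where "\<sigma> i = (if i \<in> {1..n} then f i else i)" for i
  have "f ` {1..n} = {1..n}" using assms by (intro endo_inj_surj) auto
  then have "bij_betw f {1..n} {1..n}" using assms(1) by (simp add: bij_betw_def)
  then have "bij_betw \<sigma> {1..n} {1..n}" by (rule bij_betw_cong[THEN iffD1, rotated]) (simp add: \<sigma>_def)
  then have "\<sigma> permutes {1..n}" by (rule bij_imp_permutes) (auto simp: \<sigma>_def)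
  with assms(2) show ?thesis unfolding has_pm_avoiding_def \<sigma>_def by auto
qed

lemma not_has_pm_avoidingE:
  assumes "\<not> has_pm_avoiding n G E"
  obtains S T where "S \<subseteq> {1..n}" "T \<subseteq> {1..n}" "card S + card T = n + 1"
    "\<forall>i\<in>S. \<forall>j\<in>T. (i, j) \<notin> E \<longrightarrow> \<not> G (i, j)"
proof -
  define Nb where "Nb i = {j\<in>{1..n}. G (i, j) \<and> (i, j) \<notin> E}" for i
  have "\<not> hall_condition {1..n} Nb"
  proof
    assume "hall_condition {1..n} Nb"
    then obtain f where "inj_on f {1..n}" "\<forall>i\<in>{1..n}. f i \<in> Nb i"
      using hall_marriage[of "{1..n}" Nb] unfolding Nb_def by auto
    then have "has_pm_avoiding n G E" by (intro has_pm_avoidingI) (auto simp: Nb_def)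
    then show False using assms by blast
  qed
  then obtain S where S: "S \<subseteq> {1..n}" "card (\<Union>(Nb ` S)) < card S"
    by (auto simp: hall_condition_def not_le)
  define U where "U = \<Union>(Nb ` S)"
  have U: "U \<subseteq> {1..n}" unfolding U_def Nb_def by auto
  have "card S \<le> n" using card_mono[OF _ S(1)] by simp
  moreover have "card ({1..n} - U) = n - card U" using U by (simp add: card_Diff_subset finite_subset)
  ultimately have "n + 1 - card S \<le> card ({1..n} - U)" using S(2) unfolding U_def by linarith
  then obtain T where T: "T \<subseteq> {1..n} - U" "card T = n + 1 - card S"
    by (meson finite_Diff finite_atLeastAtMost obtain_subset_with_card_n)
  have "\<forall>i\<in>S. \<forall>j\<in>T. (i, j) \<notin> E \<longrightarrow> \<not> G (i, j)"
    using T(1) unfolding U_def Nb_def by blast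
  moreover have "T \<subseteq> {1..n}" "card S + card T = n + 1" using T \<open>card S \<le> n\<close> by auto
  ultimately show ?thesis using that S(1) by blast
qed

lemma prob_random_bipartite_no_edges:
  assumes "D \<subseteq> {1..n} \<times> {1..n}" "0 \<le> p" "p \<le> 1"
  shows "measure_pmf.prob (random_bipartite n p) {G. \<forall>x\<in>D. \<not> G x} = (1 - p) ^ card D"
proof -
  define I where "I = {1..n} \<times> {1..n}"
  define B where "B x = (if x \<in> D then {False} else UNIV)" for x
  have "{G. \<forall>x\<in>D. \<not> G x} = Pi I B" using assms(1) unfolding I_def B_def Pi_def by auto
  then have "measure_pmf.prob (random_bipartite n p) {G. \<forall>x\<in>D. \<not> G x}
      = (\<Prod>x\<in>I. measure_pmf.prob (bernoulli_pmf p) (B x))"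
    unfolding random_bipartite_def I_def by (simp add: measure_Pi_pmf_Pi)
  also have "\<dots> = (\<Prod>x\<in>I. if x \<in> D then 1 - p else 1)"
    by (rule prod.cong) (auto simp: B_def measure_pmf_single assms)
  also have "\<dots> = (\<Prod>x\<in>D. 1 - p)"
    using assms(1) unfolding I_def by (intro prod.mono_neutral_cong_right) auto
  finally show ?thesis by simp
qed

lemma card_Times_Int_le_degree:
  assumes "finite S" "finite T" "\<forall>i\<in>S. card {j\<in>T. (i, j) \<in> E} \<le> C"
  shows "card (S \<times> T \<inter> E) \<le> C * card S"
proof -
  have "S \<times> T \<inter> E = Sigma S (\<lambda>i. {j\<in>T. (i, j) \<in> E})" by auto
  then have "card (S \<times> T \<inter> E) = (\<Sum>i\<in>S. card {j\<in>T. (i, j) \<in> E})" using assms(1,2) by simp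
  also have "\<dots> \<le> C * card S" using sum_bounded_above[of S "\<lambda>i. card {j\<in>T. (i, j) \<in> E}" C] assms(3)
    by (simp add: mult.commute)
  finally show ?thesis .
qed

lemma card_rectangle_Diff_ge:
  assumes S: "S \<subseteq> {1..n}" and T: "T \<subseteq> {1..n}" and ST: "card S + card T = n + 1"
    and deg: "\<forall>i\<in>{1..n}. card {j\<in>{1..n}. (i, j) \<in> E} \<le> C \<and> card {j\<in>{1..n}. (j, i) \<in> E} \<le> C"
  shows "real (min (card S) (card T)) * (real n / 2 - real C) \<le> real (card (S \<times> T - E))"
proof -
  let ?m = "min (card S) (card T)" and ?M = "max (card S) (card T)" and ?k = "card (S \<times> T \<inter> E)"
  have fin: "finite S" "finite T" using S T finite_subset by auto
  have "card {j\<in>T. (i, j) \<in> E} \<le> C" if "i \<in> S" for i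
  proof -
    have "card {j\<in>T. (i, j) \<in> E} \<le> card {j\<in>{1..n}. (i, j) \<in> E}" using T by (intro card_mono) auto
    also have "\<dots> \<le> C" using deg that S by auto
    finally show ?thesis .
  qed
  then have "?k \<le> C * card S" using card_Times_Int_le_degree[OF fin] by blast
  moreover have "?k \<le> C * card T"
  proof -
    have "card {i\<in>S. (j, i) \<in> E\<inverse>} \<le> C" if "j \<in> T" for j
    proof -
      have "card {i\<in>S. (j, i) \<in> E\<inverse>} \<le> card {i\<in>{1..n}. (i, j) \<in> E}" using S by (intro card_mono) auto
      also have "\<dots> \<le> C" using deg that T by auto
      finally show ?thesis .
    qed
    then have "card (T \<times> S \<inter> E\<inverse>) \<le> C * card T" using card_Times_Int_le_degree[OF fin(2,1)] by blast
    moreover have "S \<times> T \<inter> E = (T \<times> S \<inter> E\<inverse>)\<inverse>" by auto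
    ultimately show ?thesis by simp
  qed
  ultimately have "?k \<le> C * ?m" by (simp add: min_def)
  then have "real ?k \<le> real ?m * real C" by (metis mult.commute of_nat_le_iff of_nat_mult)
  moreover have "card S * card T = ?k + card (S \<times> T - E)"
    using card_Int_Diff[of "S \<times> T" E] fin by (simp add: card_cartesian_product)
  then have "real (card S) * real (card T) = real ?k + real (card (S \<times> T - E))"
    by (metis of_nat_add of_nat_mult)
  moreover have "real ?m * real ?M = real (card S) * real (card T)" by (simp add: min_def max_def)
  moreover have "real ?m * (real n / 2 - real C) \<le> real ?m * (real ?M - real C)"
    using ST by (intro mult_left_mono) auto
  ultimately show ?thesis unfolding right_diff_distrib by linarith
qed

lemma prob_empty_rectangle_le:
  assumes "0 \<le> p" "p < 1"
    and "S \<subseteq> {1..n}" "T \<subseteq> {1..n}" "card S + card T = n + 1"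
    and "\<forall>i\<in>{1..n}. card {j\<in>{1..n}. (i, j) \<in> E} \<le> C \<and> card {j\<in>{1..n}. (j, i) \<in> E} \<le> C"
  shows "measure_pmf.prob (random_bipartite n p) {G. \<forall>x\<in>S \<times> T - E. \<not> G x}
           \<le> ((1 - p) powr (real n / 2 - real C)) ^ min (card S) (card T)"
proof -
  have q: "0 < 1 - p" "1 - p \<le> 1" using assms(1,2) by auto
  have "measure_pmf.prob (random_bipartite n p) {G. \<forall>x\<in>S \<times> T - E. \<not> G x}
      = (1 - p) ^ card (S \<times> T - E)"
    using assms(1-4) by (intro prob_random_bipartite_no_edges) auto
  also have "\<dots> = (1 - p) powr real (card (S \<times> T - E))" using q by (simp add: powr_realpow)
  also have "\<dots> \<le> (1 - p) powr (real (min (card S) (card T)) * (real n / 2 - real C))"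
    using card_rectangle_Diff_ge[OF assms(3-6)] q by (intro powr_mono') auto
  also have "\<dots> = ((1 - p) powr (real n / 2 - real C)) ^ min (card S) (card T)"
    using q by (simp add: powr_powr powr_realpow[symmetric] mult.commute)
  finally show ?thesis .
qed

lemma binomial_le_pow_min:
  assumes "k \<le> n"
  shows "n choose k \<le> n ^ min k (n - k)"
  using binomial_le_pow[OF assms] binomial_le_pow[of "n - k" n] binomial_symmetric[OF assms]
  by (simp add: min_def)

lemma binomial_product_le:
  assumes "1 \<le> s" "s \<le> n"
  shows "(n choose s) * (n choose (n + 1 - s)) \<le> (n ^ 2) ^ min s (n + 1 - s)"
proof -
  let ?m = "min s (n + 1 - s)"
  have pow_mono: "n ^ k \<le> n ^ ?m" if "k \<le> ?m" for k using that assms by (intro power_increasing) auto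
  have "n choose s \<le> n ^ min s (n - s)" by (rule binomial_le_pow_min[OF assms(2)])
  also have "\<dots> \<le> n ^ ?m" by (rule pow_mono) auto
  finally have "n choose s \<le> n ^ ?m" .
  moreover have "n choose (n + 1 - s) \<le> n ^ min (n + 1 - s) (n - (n + 1 - s))"
    by (rule binomial_le_pow_min) (use assms in auto)
  moreover have "\<dots> \<le> n ^ ?m" by (rule pow_mono) (use assms in auto)
  ultimately have "(n choose s) * (n choose (n + 1 - s)) \<le> n ^ ?m * n ^ ?m"
    by (meson mult_le_mono order_trans)
  also have "\<dots> = (n ^ 2) ^ ?m" by (simp add: power2_eq_square power_mult_distrib)
  finally show ?thesis .
qed

lemma sum_binomial_products_le:
  fixes y :: real
  assumes "0 \<le> y" "real n ^ 2 * y \<le> 1"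
  shows "(\<Sum>s\<in>{1..n}. real ((n choose s) * (n choose (n + 1 - s))) * y ^ min s (n + 1 - s))
           \<le> real n ^ 3 * y"
proof -
  have "real ((n choose s) * (n choose (n + 1 - s))) * y ^ min s (n + 1 - s) \<le> real n ^ 2 * y"
    if "s \<in> {1..n}" for s
  proof -
    let ?m = "min s (n + 1 - s)"
    have "real ((n choose s) * (n choose (n + 1 - s))) * y ^ ?m \<le> real ((n ^ 2) ^ ?m) * y ^ ?m"
      using binomial_product_le[of s n] that assms(1) by (intro mult_right_mono) (simp_all only: of_nat_le_iff atLeastAtMost_iff zero_le_power)
    also have "\<dots> = (real n ^ 2 * y) ^ ?m" by (simp add: power_mult_distrib)
    also have "\<dots> \<le> (real n ^ 2 * y) ^ 1" using assms that by (intro power_decreasing) auto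
    finally show ?thesis by simp
  qed
  then have "(\<Sum>s\<in>{1..n}. real ((n choose s) * (n choose (n + 1 - s))) * y ^ min s (n + 1 - s))
      \<le> (\<Sum>s\<in>{1..n}. real n ^ 2 * y)"
    by (rule sum_mono)
  also have "\<dots> = real n ^ 3 * y" by (simp add: power3_eq_cube power2_eq_square mult.assoc)
  finally show ?thesis .
qed

lemma prob_not_has_pm_avoiding_le_sum:
  assumes "0 \<le> p" "p < 1"
    and deg: "\<forall>i\<in>{1..n}. card {j\<in>{1..n}. (i, j) \<in> E} \<le> C \<and> card {j\<in>{1..n}. (j, i) \<in> E} \<le> C"
  defines "y \<equiv> (1 - p) powr (real n / 2 - real C)"
  shows "measure_pmf.prob (random_bipartite n p) {G. \<not> has_pm_avoiding n G E}
           \<le> (\<Sum>s\<in>{1..n}. real ((n choose s) * (n choose (n + 1 - s))) * y ^ min s (n + 1 - s))"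
proof -
  define Sub where "Sub k = {S. S \<subseteq> {1..n} \<and> card S = k}" for k
  define W where "W = (SIGMA s:{1..n}. Sub s \<times> Sub (n + 1 - s))"
  define Ev where "Ev S T = {G. \<forall>x\<in>S \<times> T - E. \<not> G x}" for S T
  let ?P = "measure_pmf.prob (random_bipartite n p)"
  have finSub: "finite (Sub k)" for k unfolding Sub_def by auto
  then have finW: "finite W" unfolding W_def by auto
  have "{G. \<not> has_pm_avoiding n G E} \<subseteq> (\<Union>(s, S, T)\<in>W. Ev S T)"
  proof
    fix G assume "G \<in> {G. \<not> has_pm_avoiding n G E}"
    then obtain S T where "S \<subseteq> {1..n}" "T \<subseteq> {1..n}" "card S + card T = n + 1"
      "\<forall>i\<in>S. \<forall>j\<in>T. (i, j) \<notin> E \<longrightarrow> \<not> G (i, j)"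
      using not_has_pm_avoidingE by blast
    moreover from this have "card S \<in> {1..n}" using card_mono[of "{1..n}" S] card_mono[of "{1..n}" T] by auto
    ultimately show "G \<in> (\<Union>(s, S, T)\<in>W. Ev S T)"
      unfolding W_def Sub_def Ev_def by (intro UN_I[of "(card S, S, T)"]) auto
  qed
  then have "?P {G. \<not> has_pm_avoiding n G E} \<le> ?P (\<Union>(s, S, T)\<in>W. Ev S T)"
    by (intro measure_pmf.finite_measure_mono) auto
  also have "\<dots> \<le> (\<Sum>(s, S, T)\<in>W. ?P (Ev S T))"
    using measure_pmf.finite_measure_subadditive_finite[OF finW, of "\<lambda>(s, S, T). Ev S T"]
    by (simp add: case_prod_unfold)
  also have "\<dots> \<le> (\<Sum>(s, S, T)\<in>W. y ^ min s (n + 1 - s))"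
  proof (intro sum_mono, clarify)
    fix s S T assume "(s, S, T) \<in> W"
    then have ST: "S \<subseteq> {1..n}" "T \<subseteq> {1..n}" "card S + card T = n + 1" "card S = s"
      unfolding W_def Sub_def by auto
    then have "?P (Ev S T) \<le> y ^ min (card S) (card T)"
      unfolding Ev_def y_def by (intro prob_empty_rectangle_le[OF assms(1,2) _ _ _ deg])
    moreover have "card T = n + 1 - s" using ST(3,4) by simp
    ultimately show "?P (Ev S T) \<le> y ^ min s (n + 1 - s)" using ST(4) by simp
  qed
  also have "\<dots> = (\<Sum>s\<in>{1..n}. \<Sum>(S, T)\<in>Sub s \<times> Sub (n + 1 - s). y ^ min s (n + 1 - s))"
    unfolding W_def using finSub by (intro sum.Sigma[symmetric]) auto
  also have "\<dots> = (\<Sum>s\<in>{1..n}. real ((n choose s) * (n choose (n + 1 - s))) * y ^ min s (n + 1 - s))"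
    by (simp add: Sub_def n_subsets card_cartesian_product case_prod_unfold)
  finally show ?thesis .
qed

lemma prob_not_has_pm_avoiding_le:
  assumes "0 \<le> p" "p < 1" "1 \<le> n"
    and deg: "\<forall>i\<in>{1..n}. card {j\<in>{1..n}. (i, j) \<in> E} \<le> C \<and> card {j\<in>{1..n}. (j, i) \<in> E} \<le> C"
  shows "measure_pmf.prob (random_bipartite n p) {G. \<not> has_pm_avoiding n G E}
           \<le> real n ^ 3 * (1 - p) powr (real n / 2 - real C)"
proof -
  define y where "y = (1 - p) powr (real n / 2 - real C)"
  have "0 \<le> y" unfolding y_def by simp
  show ?thesis
  proof (cases "real n ^ 2 * y \<le> 1")
    case True
    with prob_not_has_pm_avoiding_le_sum[OF assms(1,2) deg] sum_binomial_products_le[OF \<open>0 \<le> y\<close>]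
    show ?thesis unfolding y_def by (meson order_trans)
  next
    case False
    then have "1 \<le> real n * (real n ^ 2 * y)" using assms(3) \<open>0 \<le> y\<close>
      by (smt (verit) mult_le_cancel_right1 of_nat_1 of_nat_mono)
    then have "1 \<le> real n ^ 3 * y" by (simp add: power3_eq_cube power2_eq_square mult.assoc)
    then show ?thesis unfolding y_def using measure_pmf.prob_le_1 by (meson order_trans)
  qed
qed

theorem lemma9:
  fixes p :: real and C :: nat
  assumes "0 < p" and "p < 1" and "C > 0"
  shows "\<exists>c>0. \<exists>N. \<forall>n\<ge>N. \<forall>E. E \<subseteq> {1..n} \<times> {1..n} \<longrightarrow>
           (\<forall>i\<in>{1..n}. card {j\<in>{1..n}. (i, j) \<in> E} \<le> C \<and> card {j\<in>{1..n}. (j, i) \<in> E} \<le> C) \<longrightarrow>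
           measure_pmf.prob (random_bipartite n p) {G. has_pm_avoiding n G E} \<ge> 1 - exp (- c * real n)"
proof -
  define c where "c = - ln (1 - p) / 4"
  have "c > 0" using assms(1,2) unfolding c_def by simp
  have "ln (1 - p) < 0" using assms(1,2) by simp
  then have "eventually (\<lambda>n::nat. real n ^ 3 * (1 - p) powr (real n / 2 - real C) \<le> exp (- c * real n)) at_top"
    using assms(2) unfolding c_def by real_asymp
  then obtain N where N: "\<And>n. n \<ge> N \<Longrightarrow> real n ^ 3 * (1 - p) powr (real n / 2 - real C) \<le> exp (- c * real n)"
    unfolding eventually_at_top_linorder by blast
  show ?thesis
  proof (intro exI[of _ c] conjI \<open>c > 0\<close> exI[of _ "max N 1"] allI impI)
    fix n :: nat and E :: "(nat \<times> nat) set"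
    assume "max N 1 \<le> n"
      and deg: "\<forall>i\<in>{1..n}. card {j\<in>{1..n}. (i, j) \<in> E} \<le> C \<and> card {j\<in>{1..n}. (j, i) \<in> E} \<le> C"
    then have "measure_pmf.prob (random_bipartite n p) {G. \<not> has_pm_avoiding n G E} \<le> exp (- c * real n)"
      using prob_not_has_pm_avoiding_le[of p n E C] N[of n] assms(1,2) by fastforce
    moreover have "measure_pmf.prob (random_bipartite n p) {G. has_pm_avoiding n G E}
        = 1 - measure_pmf.prob (random_bipartite n p) {G. \<not> has_pm_avoiding n G E}"
      using measure_pmf.prob_compl[of "{G. has_pm_avoiding n G E}" "random_bipartite n p"]
      by (simp add: Compl_eq_Diff_UNIV[symmetric] Collect_neg_eq[symmetric])
    ultimately show "1 - exp (- c * real n) \<le> measure_pmf.prob (random_bipartite n p) {G. has_pm_avoiding n G E}"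
      by linarith
  qed
qed

end
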